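(* Let $G$ be a graph in which every edge is part of at most two triangles, and for a state $s$ (a $\pm1$ labeling of the edges of $G$) let $P(s)$ be the number of imbalanced triangles of $G$ in $s$. Then $P$ is nonincreasing along the nondeterministic triad dynamics: if $s\rightarrow t$ is a legal transition, then $P(s)\geq P(t)$.
   Context: A triangle is balanced if the product of its three edge labels is $1$, imbalanced otherwise. Nondeterministic triad dynamics: a legal transition consists of choosing an imbalanced triangle $T$ and changing the sign of one edge of $T$. *)

theory Defs
  imports Main
begin

definition simple_graph :: "'a set \<Rightarrow> 'a set set \<Rightarrow> bool" where
  "simple_graph V E \<longleftrightarrow> finite V \<and> (\<forall>e\<in>E. e \<subseteq> V \<and> card e = 2)"

definition tri_edges :: "'a set \<Rightarrow> 'a set set" where
  "tri_edges T = {e. e \<subseteq> T \<and> card e = 2}"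

definition triangles :: "'a set \<Rightarrow> 'a set set \<Rightarrow> 'a set set" where
  "triangles V E = {T. T \<subseteq> V \<and> card T = 3 \<and> tri_edges T \<subseteq> E}"

text \<open>A state is a +-1 labelling of the edges (values off E are irrelevant).\<close>
definition is_state :: "'a set set \<Rightarrow> ('a set \<Rightarrow> int) \<Rightarrow> bool" where
  "is_state E s \<longleftrightarrow> (\<forall>e\<in>E. s e = 1 \<or> s e = -1)"

definition balanced :: "('a set \<Rightarrow> int) \<Rightarrow> 'a set \<Rightarrow> bool" where
  "balanced s T \<longleftrightarrow> (\<Prod>e\<in>tri_edges T. s e) = 1"

definition imbalanced :: "('a set \<Rightarrow> int) \<Rightarrow> 'a set \<Rightarrow> bool" where
  "imbalanced s T \<longleftrightarrow> \<not> balanced s T"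

definition P :: "'a set \<Rightarrow> 'a set set \<Rightarrow> ('a set \<Rightarrow> int) \<Rightarrow> nat" where
  "P V E s = card {T \<in> triangles V E. imbalanced s T}"

definition legal_transition :: "'a set \<Rightarrow> 'a set set \<Rightarrow> ('a set \<Rightarrow> int) \<Rightarrow> ('a set \<Rightarrow> int) \<Rightarrow> bool" where
  "legal_transition V E s t \<longleftrightarrow>
     (\<exists>T\<in>triangles V E. imbalanced s T \<and> (\<exists>e\<in>tri_edges T. t = s(e := - s e)))"

end

theory Submission
  imports Defs
begin

text \<open>Flipping the sign of an edge e negates the sign product of exactly the triangles through e,
  so it swaps imbalanced and balanced among those triangles and leaves all others alone. The
  triangles through e number at most two, and the triangle chosen by the transition is one of
  them and becomes balanced; hence at most one triangle can turn imbalanced while at least one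
  turns balanced.\<close>

lemma prod_pm_one:
  fixes s :: "'b \<Rightarrow> 'c::comm_ring_1"
  assumes "finite F" and "\<forall>x\<in>F. s x = 1 \<or> s x = -1"
  shows "prod s F = 1 \<or> prod s F = -1"
  using assms by (induction F rule: finite_induct) auto

lemma prod_flip_sign:
  fixes s :: "'b \<Rightarrow> 'c::comm_ring_1"
  assumes "finite F" and "e \<in> F"
  shows "prod (s(e := - s e)) F = - prod s F"
proof -
  have "prod (s(e := - s e)) F = - s e * prod (s(e := - s e)) (F - {e})"
    using assms by (simp add: prod.remove)
  also have "prod (s(e := - s e)) (F - {e}) = prod s (F - {e})"
    by (intro prod.cong) auto
  finally show ?thesis
    using assms by (simp add: prod.remove)
qed

lemma finite_triangles:
  assumes "simple_graph V E"
  shows "finite (triangles V E)"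
proof (rule finite_subset)
  show "triangles V E \<subseteq> Pow V"
    unfolding triangles_def by auto
  show "finite (Pow V)"
    using assms unfolding simple_graph_def by simp
qed

lemma finite_tri_edges:
  assumes "T \<in> triangles V E"
  shows "finite (tri_edges T)"
proof (rule finite_subset)
  show "tri_edges T \<subseteq> Pow T"
    unfolding tri_edges_def by auto
  have "card T = 3"
    using assms unfolding triangles_def by simp
  then show "finite (Pow T)"
    by (simp add: card_ge_0_finite)
qed

lemma imbalanced_flip_iff:
  assumes "simple_graph V E" and "is_state E s"
    and "e \<in> E" and "T \<in> triangles V E"
  shows "imbalanced (s(e := - s e)) T \<longleftrightarrow> imbalanced s T \<noteq> (e \<subseteq> T)"
proof (cases "e \<subseteq> T")
  case True
  have "card e = 2"
    using assms(1,3) unfolding simple_graph_def by simp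
  with True have "e \<in> tri_edges T"
    unfolding tri_edges_def by simp
  then have "prod (s(e := - s e)) (tri_edges T) = - prod s (tri_edges T)"
    using finite_tri_edges[OF assms(4)] by (rule prod_flip_sign[rotated])
  moreover have "prod s (tri_edges T) = 1 \<or> prod s (tri_edges T) = -1"
    using assms(2,4) finite_tri_edges[OF assms(4)]
    by (intro prod_pm_one) (auto simp: is_state_def triangles_def)
  ultimately show ?thesis
    using True unfolding imbalanced_def balanced_def by auto
next
  case False
  then have "e \<notin> tri_edges T"
    unfolding tri_edges_def by auto
  then have "prod (s(e := - s e)) (tri_edges T) = prod s (tri_edges T)"
    by (intro prod.cong) auto
  then show ?thesis
    using False unfolding imbalanced_def balanced_def by simp
qed

lemma card_symdiff_le:
  assumes "finite S" and "finite C" and "card C \<le> 2" and "S \<inter> C \<noteq> {}"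
  shows "card (sym_diff S C) \<le> card S"
proof -
  obtain T where T: "T \<in> S" "T \<in> C"
    using assms(4) by blast
  have "card (C - S) \<le> card (C - {T})"
    using T assms(2) by (intro card_mono) auto
  also have "\<dots> \<le> 1"
    using T assms(2,3) by simp
  also have "1 \<le> card (S \<inter> C)"
    using assms(1,4) by (metis One_nat_def Suc_leI card_gt_0_iff finite_Int)
  finally have "card (C - S) \<le> card (S \<inter> C)" .
  moreover have "card (sym_diff S C) = card (S - C) + card (C - S)"
    using assms(1,2) by (intro card_Un_disjoint) auto
  moreover have "card S = card (S \<inter> C) + card (S - C)"
    using assms(1) by (rule card_Int_Diff)
  ultimately show ?thesis
    by linarith
qed

theorem lemma2:
  fixes V :: "'a set" and E :: "'a set set" and s t :: "'a set \<Rightarrow> int"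
  assumes "simple_graph V E"
    and "\<forall>e\<in>E. card {T \<in> triangles V E. e \<subseteq> T} \<le> 2"
    and "is_state E s"
    and "legal_transition V E s t"
  shows "P V E s \<ge> P V E t"
proof -
  obtain T0 e where T0: "T0 \<in> triangles V E" "imbalanced s T0" "e \<in> tri_edges T0"
    and t: "t = s(e := - s e)"
    using assms(4) unfolding legal_transition_def by blast
  have "e \<in> E" "e \<subseteq> T0"
    using T0 unfolding triangles_def tri_edges_def by auto
  define S where "S = {T \<in> triangles V E. imbalanced s T}"
  define C where "C = {T \<in> triangles V E. e \<subseteq> T}"
  have "{T \<in> triangles V E. imbalanced t T} = sym_diff S C"
    using imbalanced_flip_iff[OF assms(1,3) \<open>e \<in> E\<close>] unfolding t S_def C_def by auto
  moreover have "card (sym_diff S C) \<le> card S"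
    using finite_triangles[OF assms(1)] assms(2) \<open>e \<in> E\<close> T0 \<open>e \<subseteq> T0\<close>
    by (intro card_symdiff_le) (auto simp: S_def C_def)
  ultimately show ?thesis
    unfolding P_def S_def by simp
qed

end
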